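(* Let $\mathbb{A}=(a_{i_1\ldots i_m})\in T_{m,n}$ be a tensor such that, whenever $a_{i_1\ldots i_m}>0$ and $(i_1,\ldots,i_m)$ is not of the form $(i,\ldots,i)$, we have $a_{i_1\ldots i_m}=a_{i_{\sigma(1)}\ldots i_{\sigma(m)}}$ for every permutation $\sigma$ of $\{1,\ldots,m\}$. (1) If $\mathbb{A}$ is a $B_0$ tensor, then either $\mathbb{A}$ is itself a diagonally dominated $Z$ tensor, or $$\mathbb{A}=\mathbb{M}+\sum_{k=1}^s h_k\mathcal{E}^{J_k},$$ where $\mathbb{M}\in T_{m,n}$ is a diagonally dominated $Z$ tensor, $s$ is a positive integer, $h_k>0$ and $J_k\subseteq[n]$ for $k=1,\ldots,s$, and $J_s\subsetneqq J_{s-1}\subsetneqq\cdots\subsetneqq J_1$. (2) If $\mathbb{A}$ is a $B$ tensor, then either $\mathbb{A}$ is itself a strictly diagonally dominated $Z$ tensor, or $\mathbb{A}$ admits a decomposition as in (1) in which $\mathbb{M}$ is a strictly diagonally dominated $Z$ tensor.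
   Context: $T_{m,n}$ denotes the set of real $m$th order $n$-dimensional tensors $\mathbb{A}=(a_{i_1i_2\ldots i_m})$ with $i_j\in[n]=\{1,\ldots,n\}$. $\mathbb{A}$ is a $Z$ tensor if $a_{i_1\ldots i_m}\le0$ whenever $(i_1,\ldots,i_m)$ is not of the form $(i,\ldots,i)$. $\mathbb{A}$ is diagonally dominated if for all $i\in[n]$, $a_{i\ldots i}\ge\sum\{|a_{ii_2\ldots i_m}|:(i_2,\ldots,i_m)\ne(i,\ldots,i)\}$, and strictly diagonally dominated if this holds with strict inequality for all $i$. $\mathbb{A}$ is a $B$ tensor if for all $i\in[n]$, $\sum_{i_2,\ldots,i_m=1}^n a_{ii_2\ldots i_m}>0$ and $\frac{1}{n^{m-1}}\sum_{i_2,\ldots,i_m=1}^n a_{ii_2\ldots i_m}>a_{ij_2\ldots j_m}$ for all $(j_2,\ldots,j_m)\neq(i,\ldots,i)$; $\mathbb{A}$ is a $B_0$ tensor if the same two conditions hold with $\ge$ in place of $>$. For $J\subseteq[n]$, the partially all one tensor $\mathcal{E}^J\in T_{m,n}$ has entry $1$ at $(i_1,\ldots,i_m)$ if $i_1,\ldots,i_m\in J$ and $0$ otherwise. *)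

theory Defs
  imports Complex_Main "HOL-Combinatorics.Permutations"
begin

text \<open>A real m-th order n-dimensional tensor is represented as a function on index
lists; only its values on tensor_idx m n (lists of length m with entries in {1..n})
are relevant.\<close>

type_synonym tensor = "nat list \<Rightarrow> real"

definition tensor_idx :: "nat \<Rightarrow> nat \<Rightarrow> nat list set" where
  "tensor_idx m n = {xs. length xs = m \<and> set xs \<subseteq> {1..n}}"

definition is_diag_idx :: "nat \<Rightarrow> nat list \<Rightarrow> bool" where
  "is_diag_idx m xs \<longleftrightarrow> (\<exists>i. xs = replicate m i)"

definition permute_idx :: "nat \<Rightarrow> (nat \<Rightarrow> nat) \<Rightarrow> nat list \<Rightarrow> nat list" where
  "permute_idx m \<sigma> xs = map (\<lambda>j. xs ! \<sigma> j) [0..<m]"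

definition Z_tensor :: "nat \<Rightarrow> nat \<Rightarrow> tensor \<Rightarrow> bool" where
  "Z_tensor m n A \<longleftrightarrow> (\<forall>xs\<in>tensor_idx m n. \<not> is_diag_idx m xs \<longrightarrow> A xs \<le> 0)"

definition diag_dominated :: "nat \<Rightarrow> nat \<Rightarrow> tensor \<Rightarrow> bool" where
  "diag_dominated m n A \<longleftrightarrow> (\<forall>i\<in>{1..n}.
     A (replicate m i) \<ge>
       (\<Sum>ys\<in>tensor_idx (m - 1) n - {replicate (m - 1) i}. \<bar>A (i # ys)\<bar>))"

definition strictly_diag_dominated :: "nat \<Rightarrow> nat \<Rightarrow> tensor \<Rightarrow> bool" where
  "strictly_diag_dominated m n A \<longleftrightarrow> (\<forall>i\<in>{1..n}.
     A (replicate m i) >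
       (\<Sum>ys\<in>tensor_idx (m - 1) n - {replicate (m - 1) i}. \<bar>A (i # ys)\<bar>))"

definition B_tensor :: "nat \<Rightarrow> nat \<Rightarrow> tensor \<Rightarrow> bool" where
  "B_tensor m n A \<longleftrightarrow> (\<forall>i\<in>{1..n}.
     (\<Sum>ys\<in>tensor_idx (m - 1) n. A (i # ys)) > 0 \<and>
     (\<forall>ys\<in>tensor_idx (m - 1) n. ys \<noteq> replicate (m - 1) i \<longrightarrow>
        (\<Sum>zs\<in>tensor_idx (m - 1) n. A (i # zs)) / real n ^ (m - 1) > A (i # ys)))"

definition B0_tensor :: "nat \<Rightarrow> nat \<Rightarrow> tensor \<Rightarrow> bool" where
  "B0_tensor m n A \<longleftrightarrow> (\<forall>i\<in>{1..n}.
     (\<Sum>ys\<in>tensor_idx (m - 1) n. A (i # ys)) \<ge> 0 \<and>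
     (\<forall>ys\<in>tensor_idx (m - 1) n. ys \<noteq> replicate (m - 1) i \<longrightarrow>
        (\<Sum>zs\<in>tensor_idx (m - 1) n. A (i # zs)) / real n ^ (m - 1) \<ge> A (i # ys)))"

definition all_one_tensor :: "nat set \<Rightarrow> tensor" where
  "all_one_tensor J xs = (if set xs \<subseteq> J then 1 else 0)"

definition decomposes :: "nat \<Rightarrow> nat \<Rightarrow> tensor \<Rightarrow> tensor \<Rightarrow> bool" where
  "decomposes m n A M \<longleftrightarrow> (\<exists>(s::nat) (h::nat \<Rightarrow> real) (J::nat \<Rightarrow> nat set).
     s > 0 \<and> (\<forall>k\<in>{1..s}. h k > 0 \<and> J k \<subseteq> {1..n}) \<and>
     (\<forall>k\<in>{1..<s}. J (Suc k) \<subset> J k) \<and>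
     (\<forall>xs\<in>tensor_idx m n. A xs = M xs + (\<Sum>k=1..s. h k * all_one_tensor (J k) xs)))"

end

theory Submission
  imports Defs
begin

text \<open>Let r_i \<ge> 0 be the largest off-diagonal entry in row i (or 0) and subtract from every
entry the minimum of r_j over the indices j occurring in it. By the symmetry hypothesis a positive
off-diagonal entry also occurs in the row of each of its indices, so it is at most every such r_j:
the remainder is a Z tensor. Its diagonal dominance in row i reduces to n^(m-1) r_i \<le> row sum,
which is the B_0 (resp. B) condition. Finally, the set function X \<mapsto> min_{j \<in> X} r_j is a
positive combination of indicators of the decreasing chain of level sets of r, and for X the set
of indices of an entry this is a sum of partially all one tensors.\<close>

lemma Min_image_split_at_level:
  fixes r :: "'a \<Rightarrow> real"
  assumes X: "finite X" "X \<noteq> {}" and nonneg: "\<forall>i\<in>X. 0 \<le> r i" and "0 \<le> a"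
    and above: "\<forall>i\<in>X. 0 < r i \<longrightarrow> a \<le> r i"
  shows "Min (r ` X) = a * of_bool (\<forall>i\<in>X. 0 < r i) + Min ((\<lambda>i. max 0 (r i - a)) ` X)"
proof (cases "\<forall>i\<in>X. 0 < r i")
  case True
  have "(\<lambda>i. max 0 (r i - a)) ` X = (\<lambda>y. y - a) ` r ` X"
    using True above by (force simp: image_image)
  moreover have "Min ((\<lambda>y. y - a) ` r ` X) = Min (r ` X) - a"
    using X by (intro mono_Min_commute[symmetric]) (auto simp: mono_def)
  ultimately show ?thesis using True by simp
next
  case False
  then obtain x where x: "x \<in> X" "r x = 0" using nonneg by force
  have "Min (r ` X) = 0"
    using X x nonneg by (intro antisym) (force intro: Min_le, simp)
  moreover have "Min ((\<lambda>i. max 0 (r i - a)) ` X) = 0"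
    using X x \<open>0 \<le> a\<close> by (intro antisym) (force intro: Min_le, simp)
  ultimately show ?thesis using False by simp
qed

lemma weighted_chain_Cons:
  fixes h :: "nat \<Rightarrow> real" and J :: "nat \<Rightarrow> 'a set"
  assumes h: "\<forall>k\<in>{1..s}. 0 < h k \<and> J k \<subset> P" and J: "\<forall>k\<in>{1..<s}. J (Suc k) \<subset> J k"
    and "0 < a"
  defines "h' \<equiv> \<lambda>k. if k = 1 then a else h (k - 1)"
    and "J' \<equiv> \<lambda>k. if k = 1 then P else J (k - 1)"
  shows "\<forall>k\<in>{1..Suc s}. 0 < h' k \<and> J' k \<subseteq> P"
    and "\<forall>k\<in>{1..<Suc s}. J' (Suc k) \<subset> J' k"
    and "(\<Sum>k=1..Suc s. h' k * of_bool (X \<subseteq> J' k))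
      = a * of_bool (X \<subseteq> P) + (\<Sum>k=1..s. h k * of_bool (X \<subseteq> J k))"
proof -
  show "\<forall>k\<in>{1..Suc s}. 0 < h' k \<and> J' k \<subseteq> P"
  proof
    fix k assume k: "k \<in> {1..Suc s}"
    then have "k - 1 \<in> {1..s}" if "k \<noteq> 1" using that by auto
    then have "0 < h (k - 1) \<and> J (k - 1) \<subset> P" if "k \<noteq> 1" using h that by blast
    then show "0 < h' k \<and> J' k \<subseteq> P" using \<open>0 < a\<close> by (auto simp: h'_def J'_def)
  qed
  show "\<forall>k\<in>{1..<Suc s}. J' (Suc k) \<subset> J' k"
  proof
    fix k assume k: "k \<in> {1..<Suc s}"
    show "J' (Suc k) \<subset> J' k"
    proof (cases "k = 1")
      case True
      with k h show ?thesis by (auto simp: J'_def)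
    next
      case False
      with k have k': "k - 1 \<in> {1..<s}" "Suc (k - 1) = k" by auto
      have "J k \<subset> J (k - 1)" using J[rule_format, OF k'(1)] unfolding k'(2) .
      then show ?thesis using False k by (simp add: J'_def)
    qed
  qed
  have "(\<Sum>k=1..Suc s. h' k * of_bool (X \<subseteq> J' k))
      = h' 1 * of_bool (X \<subseteq> J' 1) + (\<Sum>k=Suc 1..Suc s. h' k * of_bool (X \<subseteq> J' k))"
    by (rule sum.atLeast_Suc_atMost) simp
  also have "(\<Sum>k=Suc 1..Suc s. h' k * of_bool (X \<subseteq> J' k))
      = (\<Sum>k=1..s. h' (Suc k) * of_bool (X \<subseteq> J' (Suc k)))"
    by (rule sum.shift_bounds_cl_Suc_ivl)
  finally show "(\<Sum>k=1..Suc s. h' k * of_bool (X \<subseteq> J' k))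
      = a * of_bool (X \<subseteq> P) + (\<Sum>k=1..s. h k * of_bool (X \<subseteq> J k))"
    by (simp add: h'_def J'_def)
qed

lemma layer_cake_Min:
  fixes r :: "'a \<Rightarrow> real"
  assumes "finite I" "\<forall>i\<in>I. 0 \<le> r i"
  shows "\<exists>(s::nat) (h::nat \<Rightarrow> real) (J::nat \<Rightarrow> 'a set).
    (\<forall>k\<in>{1..s}. 0 < h k \<and> J k \<subseteq> {i\<in>I. 0 < r i}) \<and>
    (\<forall>k\<in>{1..<s}. J (Suc k) \<subset> J k) \<and>
    (\<forall>X. X \<subseteq> I \<longrightarrow> X \<noteq> {} \<longrightarrow> (\<Sum>k=1..s. h k * of_bool (X \<subseteq> J k)) = Min (r ` X))"
  using assms(2)
proof (induction "card {i\<in>I. 0 < r i}" arbitrary: r rule: less_induct)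
  case less
  define P where "P = {i\<in>I. 0 < r i}"
  have "finite P" using assms(1) by (simp add: P_def)
  show ?case
  proof (cases "P = {}")
    case True
    have "r ` X = {0}" if "X \<subseteq> I" "X \<noteq> {}" for X
      using that less.prems True by (force simp: P_def)
    then have "Min (r ` X) = 0" if "X \<subseteq> I" "X \<noteq> {}" for X
      using that by simp
    then show ?thesis by (intro exI[of _ 0]) auto
  next
    case False
    text \<open>Peel off the lowest positive level a: the truncation of r - a has smaller support.\<close>
    define a where "a = Min (r ` P)"
    have "a \<in> r ` P" unfolding a_def using \<open>finite P\<close> False by simp
    then obtain i0 where i0: "i0 \<in> P" "r i0 = a" by auto
    have "0 < a" using i0 by (simp add: P_def)
    have a_le: "a \<le> r i" if "i \<in> P" for i
      using \<open>finite P\<close> that unfolding a_def by simp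
    define r' where "r' i = max 0 (r i - a)" for i
    have "{i\<in>I. 0 < r' i} \<subseteq> P - {i0}"
      using i0 by (auto simp: r'_def P_def)
    then have support': "{i\<in>I. 0 < r' i} \<subset> P" using i0(1) by blast
    then have "card {i\<in>I. 0 < r' i} < card P"
      using \<open>finite P\<close> by (rule psubset_card_mono[rotated])
    then obtain s h J where
      h: "\<forall>k\<in>{1..s}. 0 < h k \<and> J k \<subseteq> {i\<in>I. 0 < r' i}" and
      J: "\<forall>k\<in>{1..<s}. J (Suc k) \<subset> J k" and
      sum: "\<forall>X. X \<subseteq> I \<longrightarrow> X \<noteq> {} \<longrightarrow> (\<Sum>k=1..s. h k * of_bool (X \<subseteq> J k)) = Min (r' ` X)"
      using less.hyps[of r'] by (auto simp: P_def r'_def)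
    have "\<forall>k\<in>{1..s}. 0 < h k \<and> J k \<subset> P" using h support' by blast
    note chain = weighted_chain_Cons[OF this J \<open>0 < a\<close>]
    have split: "a * of_bool (X \<subseteq> P) + (\<Sum>k=1..s. h k * of_bool (X \<subseteq> J k)) = Min (r ` X)"
      if X: "X \<subseteq> I" "X \<noteq> {}" for X
    proof -
      have "finite X" using X(1) assms(1) by (rule finite_subset)
      moreover have "\<forall>i\<in>X. 0 \<le> r i" "\<forall>i\<in>X. 0 < r i \<longrightarrow> a \<le> r i"
        using X(1) less.prems a_le by (auto simp: P_def)
      moreover have "X \<subseteq> P \<longleftrightarrow> (\<forall>i\<in>X. 0 < r i)" using X(1) by (auto simp: P_def)
      ultimately show ?thesis
        using sum X Min_image_split_at_level[of X r a] \<open>0 < a\<close> by (simp add: r'_def)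
    qed
    show ?thesis
    proof (intro exI[of _ "Suc s"] exI[of _ "\<lambda>k. if k = 1 then a else h (k - 1)"]
        exI[of _ "\<lambda>k. if k = 1 then P else J (k - 1)"] conjI allI impI)
      fix X assume "X \<subseteq> I" "X \<noteq> {}"
      then show "(\<Sum>k=1..Suc s. (if k = 1 then a else h (k - 1)) *
          of_bool (X \<subseteq> (if k = 1 then P else J (k - 1)))) = Min (r ` X)"
        unfolding chain(3) by (rule split)
    qed (use chain(1,2) in \<open>auto simp: P_def\<close>)
  qed
qed

lemma finite_tensor_idx: "finite (tensor_idx k n)"
  unfolding tensor_idx_def using finite_lists_length_eq[of "{1..n}" k]
  by (simp add: conj_commute)

lemma card_tensor_idx: "card (tensor_idx k n) = n ^ k"
  unfolding tensor_idx_def using card_lists_length_eq[of "{1..n}" k]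
  by (simp add: conj_commute)

lemma Cons_in_tensor_idx:
  "1 \<le> m \<Longrightarrow> i \<in> {1..n} \<Longrightarrow> ys \<in> tensor_idx (m - 1) n \<Longrightarrow> i # ys \<in> tensor_idx m n"
  unfolding tensor_idx_def by auto

lemma replicate_in_tensor_idx: "i \<in> {1..n} \<Longrightarrow> replicate k i \<in> tensor_idx k n"
  unfolding tensor_idx_def by auto

lemma replicate_eq_Cons_replicate: "1 \<le> m \<Longrightarrow> replicate m i = i # replicate (m - 1) i"
  by (cases m) auto

lemma Cons_not_diag_idx:
  assumes "1 \<le> m" "ys \<noteq> replicate (m - 1) i"
  shows "\<not> is_diag_idx m (i # ys)"
proof
  assume "is_diag_idx m (i # ys)"
  then obtain c where "i # ys = c # replicate (m - 1) c"
    using replicate_eq_Cons_replicate[OF assms(1)] unfolding is_diag_idx_def by metis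
  then show False using assms(2) by simp
qed

lemma set_permute_idx:
  assumes "\<sigma> permutes {..<m}" "length xs = m"
  shows "set (permute_idx m \<sigma> xs) = set xs"
proof -
  have "set (permute_idx m \<sigma> xs) = (\<lambda>j. xs ! j) ` \<sigma> ` {..<m}"
    unfolding permute_idx_def by (auto simp: image_image)
  also have "\<dots> = set xs"
    using assms by (auto simp: permutes_image set_conv_nth)
  finally show ?thesis .
qed

lemma is_diag_idx_iff_set_subset:
  assumes "length xs = m"
  shows "is_diag_idx m xs \<longleftrightarrow> (\<exists>c. set xs \<subseteq> {c})"
proof
  show "is_diag_idx m xs \<Longrightarrow> \<exists>c. set xs \<subseteq> {c}" unfolding is_diag_idx_def by auto
next
  assume "\<exists>c. set xs \<subseteq> {c}"
  then obtain c where "set xs \<subseteq> {c}" ..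
  then have "replicate (length xs) c = xs" by (intro replicate_length_same) auto
  then show "is_diag_idx m xs" using assms unfolding is_diag_idx_def by metis
qed

lemma permute_idx_to_front:
  assumes m: "1 \<le> m" and xs: "xs \<in> tensor_idx m n" and off: "\<not> is_diag_idx m xs"
    and j: "j \<in> set xs"
  obtains \<sigma> ys where "\<sigma> permutes {..<m}" "permute_idx m \<sigma> xs = j # ys"
    "ys \<in> tensor_idx (m - 1) n" "ys \<noteq> replicate (m - 1) j"
proof -
  have len: "length xs = m" using xs by (simp add: tensor_idx_def)
  obtain p where p: "p < m" "xs ! p = j" using j len by (auto simp: in_set_conv_nth)
  define \<sigma> where "\<sigma> = Transposition.transpose 0 p"
  have \<sigma>: "\<sigma> permutes {..<m}" unfolding \<sigma>_def using p m by (intro permutes_swap_id) auto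
  define zs where "zs = permute_idx m \<sigma> xs"
  have set_zs: "set zs = set xs" unfolding zs_def using \<sigma> len by (rule set_permute_idx)
  have "length zs = m" "zs ! 0 = j"
    using m p by (simp_all add: zs_def permute_idx_def \<sigma>_def)
  then have zs: "zs = j # tl zs" using m by (cases zs) auto
  have "tl zs \<in> tensor_idx (m - 1) n"
    using xs set_zs \<open>length zs = m\<close> list.set_sel(2)[of zs] by (fastforce simp: tensor_idx_def)
  moreover have "tl zs \<noteq> replicate (m - 1) j"
  proof
    assume "tl zs = replicate (m - 1) j"
    then have "set xs \<subseteq> {j}" using zs set_zs by (metis in_set_replicate set_ConsD subsetI singletonI)
    then show False using off len is_diag_idx_iff_set_subset by blast
  qed
  ultimately show thesis using that \<sigma> zs unfolding zs_def by blast
qed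

lemma Z_tensor_cong:
  "\<forall>xs\<in>tensor_idx m n. M xs = A xs \<Longrightarrow> Z_tensor m n M = Z_tensor m n A"
  unfolding Z_tensor_def by auto

lemma diag_dominated_cong:
  assumes "1 \<le> m" "\<forall>xs\<in>tensor_idx m n. M xs = A xs"
  shows "diag_dominated m n M = diag_dominated m n A"
    and "strictly_diag_dominated m n M = strictly_diag_dominated m n A"
proof -
  have "M (replicate m i) = A (replicate m i)" if "i \<in> {1..n}" for i
    using assms replicate_in_tensor_idx[OF that] by blast
  moreover have "(\<Sum>ys\<in>tensor_idx (m - 1) n - {replicate (m - 1) i}. \<bar>M (i # ys)\<bar>)
      = (\<Sum>ys\<in>tensor_idx (m - 1) n - {replicate (m - 1) i}. \<bar>A (i # ys)\<bar>)" if "i \<in> {1..n}" for i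
    using assms Cons_in_tensor_idx[OF assms(1) that] by (intro sum.cong) auto
  ultimately show "diag_dominated m n M = diag_dominated m n A"
    and "strictly_diag_dominated m n M = strictly_diag_dominated m n A"
    unfolding diag_dominated_def strictly_diag_dominated_def by simp_all
qed

definition offdiag_row_bound :: "nat \<Rightarrow> nat \<Rightarrow> tensor \<Rightarrow> nat \<Rightarrow> real" where
  "offdiag_row_bound m n A i =
     Max (insert 0 ((\<lambda>ys. A (i # ys)) ` (tensor_idx (m - 1) n - {replicate (m - 1) i})))"

definition Z_part :: "nat \<Rightarrow> nat \<Rightarrow> tensor \<Rightarrow> tensor" where
  "Z_part m n A xs = A xs - Min (offdiag_row_bound m n A ` set xs)"

lemma offdiag_row_bound_nonneg: "0 \<le> offdiag_row_bound m n A i"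
  by (simp add: offdiag_row_bound_def finite_tensor_idx)

lemma offdiag_entry_le_row_bound:
  "ys \<in> tensor_idx (m - 1) n \<Longrightarrow> ys \<noteq> replicate (m - 1) i \<Longrightarrow> A (i # ys) \<le> offdiag_row_bound m n A i"
  by (simp add: offdiag_row_bound_def finite_tensor_idx)

lemma offdiag_row_bound_le_iff:
  "offdiag_row_bound m n A i \<le> c \<longleftrightarrow>
     0 \<le> c \<and> (\<forall>ys\<in>tensor_idx (m - 1) n. ys \<noteq> replicate (m - 1) i \<longrightarrow> A (i # ys) \<le> c)"
  by (auto simp: offdiag_row_bound_def finite_tensor_idx)

lemma offdiag_row_bound_less_iff:
  "offdiag_row_bound m n A i < c \<longleftrightarrow>
     0 < c \<and> (\<forall>ys\<in>tensor_idx (m - 1) n. ys \<noteq> replicate (m - 1) i \<longrightarrow> A (i # ys) < c)"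
  by (auto simp: offdiag_row_bound_def finite_tensor_idx)

lemma Z_tensor_Z_part:
  assumes m: "1 \<le> m"
    and sym: "\<forall>xs\<in>tensor_idx m n. A xs > 0 \<and> \<not> is_diag_idx m xs \<longrightarrow>
                (\<forall>\<sigma>. \<sigma> permutes {..<m} \<longrightarrow> A (permute_idx m \<sigma> xs) = A xs)"
  shows "Z_tensor m n (Z_part m n A)"
  unfolding Z_tensor_def
proof (intro ballI impI)
  fix xs assume xs: "xs \<in> tensor_idx m n" and off: "\<not> is_diag_idx m xs"
  have "A xs \<le> offdiag_row_bound m n A j" if j: "j \<in> set xs" for j
  proof (cases "A xs > 0")
    case True
    obtain \<sigma> ys where "\<sigma> permutes {..<m}" "permute_idx m \<sigma> xs = j # ys"
      "ys \<in> tensor_idx (m - 1) n" "ys \<noteq> replicate (m - 1) j"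
      using permute_idx_to_front[OF m xs off j] .
    then show ?thesis using sym xs True off offdiag_entry_le_row_bound by metis
  qed (use offdiag_row_bound_nonneg[of m n A j] in simp)
  moreover have "set xs \<noteq> {}" using xs m by (auto simp: tensor_idx_def)
  ultimately show "Z_part m n A xs \<le> 0" by (simp add: Z_part_def Min_ge_iff)
qed

lemma Z_part_diag_excess:
  assumes m: "1 \<le> m" and i: "i \<in> {1..n}" and Z: "Z_tensor m n (Z_part m n A)"
  defines "T \<equiv> tensor_idx (m - 1) n" and "d \<equiv> replicate (m - 1) i"
    and "r \<equiv> offdiag_row_bound m n A"
  shows "(\<Sum>ys\<in>T. A (i # ys)) - real n ^ (m - 1) * r i
      \<le> Z_part m n A (replicate m i) - (\<Sum>ys\<in>T - {d}. \<bar>Z_part m n A (i # ys)\<bar>)"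
proof -
  have finT: "finite T" and d: "d \<in> T"
    using replicate_in_tensor_idx[OF i] by (simp_all add: T_def d_def finite_tensor_idx)
  have "(\<Sum>ys\<in>T - {d}. \<bar>Z_part m n A (i # ys)\<bar>) \<le> (\<Sum>ys\<in>T - {d}. r i - A (i # ys))"
  proof (rule sum_mono)
    fix ys assume ys: "ys \<in> T - {d}"
    then have "i # ys \<in> tensor_idx m n" "\<not> is_diag_idx m (i # ys)"
      using Cons_in_tensor_idx[OF m i] Cons_not_diag_idx[OF m]
      by (auto simp: T_def d_def tensor_idx_def)
    then have "Z_part m n A (i # ys) \<le> 0" using Z by (simp add: Z_tensor_def)
    then have "\<bar>Z_part m n A (i # ys)\<bar> = Min (r ` set (i # ys)) - A (i # ys)"
      by (simp add: Z_part_def r_def)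
    also have "\<dots> \<le> r i - A (i # ys)" by simp
    finally show "\<bar>Z_part m n A (i # ys)\<bar> \<le> r i - A (i # ys)" .
  qed
  also have "\<dots> = (real (card T) - 1) * r i - ((\<Sum>ys\<in>T. A (i # ys)) - A (i # d))"
    using finT d card_gt_0_iff[of T]
    by (auto simp: sum_subtractf sum_diff1 of_nat_diff Suc_leI algebra_simps)
  finally have off_diag: "(\<Sum>ys\<in>T - {d}. \<bar>Z_part m n A (i # ys)\<bar>)
      \<le> (real (card T) - 1) * r i - ((\<Sum>ys\<in>T. A (i # ys)) - A (i # d))" .
  have "Z_part m n A (replicate m i) = A (replicate m i) - r i"
    using m by (simp add: Z_part_def r_def)
  moreover have "replicate m i = i # d" unfolding d_def using m by (rule replicate_eq_Cons_replicate)
  moreover have "real (card T) = real n ^ (m - 1)" by (simp add: T_def card_tensor_idx)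
  ultimately show ?thesis using off_diag by (simp add: algebra_simps)
qed

lemma diag_dominated_Z_part:
  assumes m: "1 \<le> m" and Z: "Z_tensor m n (Z_part m n A)"
  shows "B0_tensor m n A \<Longrightarrow> diag_dominated m n (Z_part m n A)"
    and "B_tensor m n A \<Longrightarrow> strictly_diag_dominated m n (Z_part m n A)"
proof -
  have n_pos: "0 < real n ^ (m - 1)" if "i \<in> {1..n}" for i :: nat
    using that by simp
  show "diag_dominated m n (Z_part m n A)" if "B0_tensor m n A"
    unfolding diag_dominated_def
  proof
    fix i assume i: "i \<in> {1..n}"
    have "offdiag_row_bound m n A i \<le> (\<Sum>ys\<in>tensor_idx (m - 1) n. A (i # ys)) / real n ^ (m - 1)"
      using that i n_pos[OF i] unfolding offdiag_row_bound_le_iff B0_tensor_def by simp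
    then have "real n ^ (m - 1) * offdiag_row_bound m n A i \<le> (\<Sum>ys\<in>tensor_idx (m - 1) n. A (i # ys))"
      using n_pos[OF i] by (simp add: pos_le_divide_eq mult.commute)
    then show "(\<Sum>ys\<in>tensor_idx (m - 1) n - {replicate (m - 1) i}. \<bar>Z_part m n A (i # ys)\<bar>)
        \<le> Z_part m n A (replicate m i)"
      using Z_part_diag_excess[OF m i Z] by linarith
  qed
  show "strictly_diag_dominated m n (Z_part m n A)" if "B_tensor m n A"
    unfolding strictly_diag_dominated_def
  proof
    fix i assume i: "i \<in> {1..n}"
    have "offdiag_row_bound m n A i < (\<Sum>ys\<in>tensor_idx (m - 1) n. A (i # ys)) / real n ^ (m - 1)"
      using that i n_pos[OF i] unfolding offdiag_row_bound_less_iff B_tensor_def by simp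
    then have "real n ^ (m - 1) * offdiag_row_bound m n A i < (\<Sum>ys\<in>tensor_idx (m - 1) n. A (i # ys))"
      using n_pos[OF i] by (simp add: pos_less_divide_eq mult.commute)
    then show "(\<Sum>ys\<in>tensor_idx (m - 1) n - {replicate (m - 1) i}. \<bar>Z_part m n A (i # ys)\<bar>)
        < Z_part m n A (replicate m i)"
      using Z_part_diag_excess[OF m i Z] by linarith
  qed
qed

lemma Z_part_decomposition:
  assumes "1 \<le> m"
  shows "(\<forall>xs\<in>tensor_idx m n. A xs = Z_part m n A xs) \<or> decomposes m n A (Z_part m n A)"
proof -
  obtain s h J where
    h: "\<forall>k\<in>{1..s}. 0 < h k \<and> J k \<subseteq> {i\<in>{1..n}. 0 < offdiag_row_bound m n A i}" and
    J: "\<forall>k\<in>{1..<s}. J (Suc k) \<subset> J k" and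
    sum: "\<forall>X. X \<subseteq> {1..n} \<longrightarrow> X \<noteq> {} \<longrightarrow>
      (\<Sum>k=1..s. h k * of_bool (X \<subseteq> J k)) = Min (offdiag_row_bound m n A ` X)"
    using layer_cake_Min[of "{1..n}" "offdiag_row_bound m n A"] offdiag_row_bound_nonneg by auto
  have A_eq: "A xs = Z_part m n A xs + (\<Sum>k=1..s. h k * all_one_tensor (J k) xs)"
    if "xs \<in> tensor_idx m n" for xs
  proof -
    have "set xs \<subseteq> {1..n}" "set xs \<noteq> {}" using that assms by (auto simp: tensor_idx_def)
    then show ?thesis using sum by (simp add: all_one_tensor_def of_bool_def Z_part_def)
  qed
  show ?thesis
  proof (cases "s = 0")
    case True
    then have "A xs = Z_part m n A xs" if "xs \<in> tensor_idx m n" for xs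
      using A_eq[OF that] by simp
    then show ?thesis by blast
  next
    case False
    have "decomposes m n A (Z_part m n A)"
      unfolding decomposes_def
    proof (intro exI[of _ s] exI[of _ h] exI[of _ J] conjI ballI)
      show "0 < s" using False by simp
    next
      fix k assume "k \<in> {1..s}"
      then show "0 < h k" "J k \<subseteq> {1..n}" using h by blast+
    next
      fix k assume "k \<in> {1..<s}"
      then show "J (Suc k) \<subset> J k" using J by blast
    qed (rule A_eq)
    then show ?thesis ..
  qed
qed

theorem theorem4p3:
  fixes m n :: nat and A :: tensor
  assumes "1 \<le> m"
    and sym: "\<forall>xs\<in>tensor_idx m n. A xs > 0 \<and> \<not> is_diag_idx m xs \<longrightarrow>
                (\<forall>\<sigma>. \<sigma> permutes {..<m} \<longrightarrow> A (permute_idx m \<sigma> xs) = A xs)"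
  shows "(B0_tensor m n A \<longrightarrow>
            (Z_tensor m n A \<and> diag_dominated m n A) \<or>
            (\<exists>M. Z_tensor m n M \<and> diag_dominated m n M \<and> decomposes m n A M))
       \<and> (B_tensor m n A \<longrightarrow>
            (Z_tensor m n A \<and> strictly_diag_dominated m n A) \<or>
            (\<exists>M. Z_tensor m n M \<and> strictly_diag_dominated m n M \<and> decomposes m n A M))"
proof -
  let ?M = "Z_part m n A"
  have Z: "Z_tensor m n ?M" using Z_tensor_Z_part[OF assms] .
  note dd = diag_dominated_Z_part[OF assms(1) Z]
  consider (equal) "\<forall>xs\<in>tensor_idx m n. ?M xs = A xs" | (decomp) "decomposes m n A ?M"
    using Z_part_decomposition[OF assms(1), of n A] by auto
  then show ?thesis
  proof cases
    case equal
    then show ?thesis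
      using Z dd Z_tensor_cong diag_dominated_cong[OF assms(1)] by metis
  next
    case decomp
    then show ?thesis using Z dd by blast
  qed
qed

end
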